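(* Consider the Hamiltonian control system described in the context satisfying (A1), (A2), and suppose (A5) holds with constant $\epsilon$. Then for all $x\in\mathcal{X}\setminus H_{\mathrm{tgt}}$, $$v_\epsilon(x)\le L_H C_f \quad\text{and}\quad T_\epsilon^\star(x)\ge \frac{\epsilon}{L_H C_f}.$$
   Context: System: $\dot x = f(x,u)=J(x)\nabla H(x)+G(x)u$, with state $x\in\mathcal{X}\subset\mathbb{R}^n$, $\mathcal{X}$ compact, $H:\mathbb{R}^n\to\mathbb{R}$, $J(x)$ skew-symmetric, input $u\in U\subset\mathbb{R}^m$, $U$ compact. Admissible control signals are piecewise continuous measurable maps into $U$; $\phi(t,x,u)$ denotes the state at time $t$ from $x$ under $u$. (A1) $H$ is $C^1$ on $\mathcal{X}$ and $\|\nabla H(x)\|\le L_H$ on $\mathcal{X}$. (A2) There is $L>0$ with $\|f(x_1,u)-f(x_2,u)\|\le L\|x_1-x_2\|$ for all $x_1,x_2\in\mathcal{X}$, $u\in U$. $C_f>0$ is a constant with $\|f(x,u)\|\le C_f$ for all $x\in\mathcal{X}$, $u\in U$. Target: $S_{\mathrm{tgt}}\subseteq\mathcal{X}$ compact and connected, $H(S_{\mathrm{tgt}})=[H_{\min},H_{\max}]$, $H_+^\star=(H_{\max}+H_{\min})/2$, $H_-^\star=(H_{\max}-H_{\min})/2$, $\Delta H(x):=|H(x)-H_+^\star|-H_-^\star$; $H_{\mathrm{tgt}}:=\{x\in\mathcal{X}:\Delta H(x)\le0\}$, and for $0<\epsilon<H_-^\star$, $H_{\mathrm{tgt}}^\epsilon:=\{x\in\mathcal{X}:\Delta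 H(x)\le-\epsilon\}$. $T_\epsilon(x,u):=\inf\{t>0:\phi(t,x,u)\in H_{\mathrm{tgt}}^\epsilon\}$, $T_\epsilon^\star(x):=\inf_u T_\epsilon(x,u)$, $v_\epsilon(x):=(\Delta H(x)+\epsilon)/T_\epsilon^\star(x)$. (A5) There exists $\epsilon>0$ with $\inf_{x\in\mathcal{X}\setminus H_{\mathrm{tgt}}^\epsilon}v_\epsilon(x)>0$. *)

theory Defs
  imports "HOL-Analysis.Analysis"
begin

definition ham_field ::
  "(real^'n \<Rightarrow> real^'n^'n) \<Rightarrow> (real^'n \<Rightarrow> real^'n) \<Rightarrow> (real^'n \<Rightarrow> real^'m^'n)
    \<Rightarrow> real^'n \<Rightarrow> real^'m \<Rightarrow> real^'n" where
  "ham_field J gradH G x u = J x *v gradH x + G x *v u"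

definition piecewise_continuous :: "(real \<Rightarrow> 'a::topological_space) \<Rightarrow> bool" where
  "piecewise_continuous u \<longleftrightarrow>
     (\<forall>T\<ge>0. \<exists>S. finite S \<and> (\<forall>t\<in>{0..T} - S. continuous (at t within {0..T}) u))"

definition admissible :: "(real^'m) set \<Rightarrow> (real \<Rightarrow> real^'m) \<Rightarrow> bool" where
  "admissible U u \<longleftrightarrow> (\<forall>t\<ge>0. u t \<in> U) \<and> u \<in> borel_measurable lborel \<and> piecewise_continuous u"

definition Hplus :: "real \<Rightarrow> real \<Rightarrow> real" where
  "Hplus Hmin Hmax = (Hmax + Hmin) / 2"

definition Hminus :: "real \<Rightarrow> real \<Rightarrow> real" where
  "Hminus Hmin Hmax = (Hmax - Hmin) / 2"

definition DeltaH :: "(real^'n \<Rightarrow> real) \<Rightarrow> real \<Rightarrow> real \<Rightarrow> real^'n \<Rightarrow> real" where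
  "DeltaH H Hmin Hmax x = \<bar>H x - Hplus Hmin Hmax\<bar> - Hminus Hmin Hmax"

definition H_tgt :: "(real^'n) set \<Rightarrow> (real^'n \<Rightarrow> real) \<Rightarrow> real \<Rightarrow> real \<Rightarrow> (real^'n) set" where
  "H_tgt X H Hmin Hmax = {x\<in>X. DeltaH H Hmin Hmax x \<le> 0}"

definition H_tgt_eps ::
  "(real^'n) set \<Rightarrow> (real^'n \<Rightarrow> real) \<Rightarrow> real \<Rightarrow> real \<Rightarrow> real \<Rightarrow> (real^'n) set" where
  "H_tgt_eps X H Hmin Hmax \<epsilon> = {x\<in>X. DeltaH H Hmin Hmax x \<le> - \<epsilon>}"

text \<open>Hitting time T_eps(x,u) (infimum of the empty set is +oo).\<close>
definition T_eps ::
  "(real \<Rightarrow> real^'n \<Rightarrow> (real \<Rightarrow> real^'m) \<Rightarrow> real^'n) \<Rightarrow> (real^'n) set \<Rightarrow> (real^'n \<Rightarrow> real)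
    \<Rightarrow> real \<Rightarrow> real \<Rightarrow> real \<Rightarrow> real^'n \<Rightarrow> (real \<Rightarrow> real^'m) \<Rightarrow> ereal" where
  "T_eps phi X H Hmin Hmax \<epsilon> x u =
     Inf (ereal ` {t. t > 0 \<and> phi t x u \<in> H_tgt_eps X H Hmin Hmax \<epsilon>})"

definition T_star ::
  "(real \<Rightarrow> real^'n \<Rightarrow> (real \<Rightarrow> real^'m) \<Rightarrow> real^'n) \<Rightarrow> (real^'m) set \<Rightarrow> (real^'n) set
    \<Rightarrow> (real^'n \<Rightarrow> real) \<Rightarrow> real \<Rightarrow> real \<Rightarrow> real \<Rightarrow> real^'n \<Rightarrow> ereal" where
  "T_star phi U X H Hmin Hmax \<epsilon> x =
     (INF u\<in>{u. admissible U u}. T_eps phi X H Hmin Hmax \<epsilon> x u)"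

definition v_eps ::
  "(real \<Rightarrow> real^'n \<Rightarrow> (real \<Rightarrow> real^'m) \<Rightarrow> real^'n) \<Rightarrow> (real^'m) set \<Rightarrow> (real^'n) set
    \<Rightarrow> (real^'n \<Rightarrow> real) \<Rightarrow> real \<Rightarrow> real \<Rightarrow> real \<Rightarrow> real^'n \<Rightarrow> ereal" where
  "v_eps phi U X H Hmin Hmax \<epsilon> x =
     ereal (DeltaH H Hmin Hmax x + \<epsilon>) / T_star phi U X H Hmin Hmax \<epsilon> x"

end

theory Submission
  imports Defs
begin

(* Along every trajectory H changes at rate at most |grad H| |f| <= L_H C_f. Reaching
   H_tgt^eps from a point x outside H_tgt forces Delta H to drop by Delta H(x) + eps >= eps,
   which therefore takes time at least (Delta H(x) + eps) / (L_H C_f); both bounds follow.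
   Trajectories are only Caratheodory solutions, so instead of the chain rule H is shown to be
   Lipschitz along them, by a local estimate from the derivative of H. *)

lemma integral_equation_lipschitz:
  fixes F :: "real \<Rightarrow> 'a::banach"
  assumes integrable: "\<And>t. 0 \<le> t \<Longrightarrow> F integrable_on {0..t}"
    and solution: "\<And>t. 0 \<le> t \<Longrightarrow> p t = x + integral {0..t} F"
    and bound: "\<And>s. 0 \<le> s \<Longrightarrow> norm (F s) \<le> C"
  shows "C-lipschitz_on {0..} p"
proof -
  have C: "0 \<le> C"
    using bound[of 0] norm_ge_zero order_trans by blast
  have increment: "dist (p t) (p s) \<le> C * (t - s)" if st: "0 \<le> s" "s \<le> t" for s t
  proof -
    have "integral {0..s} F + integral {s..t} F = integral {0..t} F"
      using st integrable[of t] by (intro Henstock_Kurzweil_Integration.integral_combine) auto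
    then have "p t - p s = integral {s..t} F"
      using solution[of s] solution[of t] st by (simp add: algebra_simps)
    moreover have "F integrable_on {s..t}"
      using integrable_subinterval_real[of F 0 t s t] integrable st by simp
    then have "norm (integral {s..t} F) \<le> C * Henstock_Kurzweil_Integration.content {s..t}"
    proof (rule has_integral_bound_real[OF C finite.emptyI integrable_integral])
      fix r assume "r \<in> {s..t} - {}"
      then show "norm (F r) \<le> C" using st bound by simp
    qed
    ultimately show ?thesis
      using st by (simp add: dist_norm)
  qed
  show ?thesis
  proof (rule lipschitz_onI[OF _ C])
    fix s t :: real assume "s \<in> {0..}" "t \<in> {0..}"
    then show "dist (p s) (p t) \<le> C * dist s t"
      using increment[of s t] increment[of t s]
      by (cases "s \<le> t") (simp_all add: dist_commute dist_real_def)
  qed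
qed

lemma has_derivative_inner_local_bound:
  fixes H :: "'a::real_inner \<Rightarrow> real"
  assumes deriv: "(H has_derivative (\<lambda>h. v \<bullet> h)) (at y)" and e: "0 < e"
  shows "\<exists>d>0. \<forall>w. norm (w - y) < d \<longrightarrow> \<bar>H w - H y\<bar> \<le> (norm v + e) * norm (w - y)"
proof -
  obtain d where "0 < d"
    and remainder: "\<And>w. norm (w - y) < d \<Longrightarrow> \<bar>H w - H y - v \<bullet> (w - y)\<bar> \<le> e * norm (w - y)"
    using deriv e unfolding has_derivative_at_alt by fastforce
  moreover have "\<bar>H w - H y\<bar> \<le> (norm v + e) * norm (w - y)" if "norm (w - y) < d" for w
    using remainder[OF that] Cauchy_Schwarz_ineq2[of v "w - y"] by (simp add: distrib_right)
  ultimately show ?thesis by blast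
qed

lemma lipschitz_on_compose_bounded_gradient:
  fixes g :: "real \<Rightarrow> 'a::real_inner" and H :: "'a \<Rightarrow> real"
  assumes "a \<le> b" and g: "C-lipschitz_on {a..b} g"
    and deriv: "\<And>t. t \<in> {a..b} \<Longrightarrow> (H has_derivative (\<lambda>h. gradH (g t) \<bullet> h)) (at (g t))"
    and bound: "\<And>t. t \<in> {a..b} \<Longrightarrow> norm (gradH (g t)) \<le> LH"
  shows "(LH * C)-lipschitz_on {a..b} (H \<circ> g)"
proof -
  have C: "0 \<le> C" using g by (rule lipschitz_on_nonneg)
  have "norm (gradH (g a)) \<le> LH"
    using bound \<open>a \<le> b\<close> by simp
  then have LH: "0 \<le> LH"
    by (rule order_trans[OF norm_ge_zero])
  have approx: "((LH + e) * C)-lipschitz_on {a..b} (H \<circ> g)" if e: "0 < e" for e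
  proof (rule locally_lipschitz_imp_lipschitz)
    have "continuous_on (g ` {a..b}) H"
    proof (rule continuous_at_imp_continuous_on, clarify)
      fix t assume "t \<in> {a..b}"
      then show "isCont H (g t)"
        by (rule has_derivative_continuous[OF deriv])
    qed
    then show "continuous_on {a..b} (H \<circ> g)"
      using lipschitz_on_continuous_on[OF g] by (rule continuous_on_compose[rotated])
    show "0 \<le> (LH + e) * C" using LH e C by simp
    fix x y assume x: "x \<in> {a..<b}" and "x < y"
    obtain d where "0 < d"
      and local: "\<And>w. norm (w - g x) < d \<Longrightarrow>
                   \<bar>H w - H (g x)\<bar> \<le> (norm (gradH (g x)) + e) * norm (w - g x)"
      using has_derivative_inner_local_bound[OF deriv e, of x] x by auto
    define \<delta> where "\<delta> = d / (C + 1)"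
    have "0 < \<delta>" "C * \<delta> < d"
      using C \<open>0 < d\<close> by (simp_all add: \<delta>_def field_simps)
    define z where "z = min (min y b) (x + \<delta>)"
    have z: "z \<in> {x<..y}" "z \<in> {a..b}" "z - x \<le> \<delta>"
      using x \<open>x < y\<close> \<open>0 < \<delta>\<close> unfolding z_def by simp_all
    have "norm (g z - g x) \<le> C * (z - x)"
      using lipschitz_onD[OF g, of z x] z x by (simp add: dist_norm dist_real_def)
    also have "\<dots> < d"
      using mult_left_mono[OF z(3) C] \<open>C * \<delta> < d\<close> by linarith
    finally have "\<bar>H (g z) - H (g x)\<bar> \<le> (norm (gradH (g x)) + e) * norm (g z - g x)"
      by (rule local)
    also have "\<dots> \<le> (LH + e) * (C * (z - x))"
      using bound[of x] x e LH \<open>norm (g z - g x) \<le> C * (z - x)\<close>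
      by (intro mult_mono) auto
    finally show "\<exists>z\<in>{x<..y}. dist ((H \<circ> g) z) ((H \<circ> g) x) \<le> (LH + e) * C * (z - x)"
      using z by (auto simp: dist_real_def mult.assoc)
  qed
  show ?thesis
  proof (rule lipschitz_onI)
    show "0 \<le> LH * C" using LH C by simp
  next
    fix s t assume st: "s \<in> {a..b}" "t \<in> {a..b}"
    have "((\<lambda>e. (LH + e) * C * dist s t) \<longlongrightarrow> LH * C * dist s t) (at_right 0)"
      by (auto intro!: tendsto_eq_intros)
    moreover have "\<forall>\<^sub>F e in at_right 0. dist ((H \<circ> g) s) ((H \<circ> g) t) \<le> (LH + e) * C * dist s t"
      using eventually_at_right_less[of 0]
      by eventually_elim (use lipschitz_onD[OF approx st] in simp)
    ultimately show "dist ((H \<circ> g) s) ((H \<circ> g) t) \<le> LH * C * dist s t"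
      by (rule tendsto_lowerbound) simp
  qed
qed

lemma lipschitz_on_energy_along_solution:
  fixes f :: "'a::{real_inner,banach} \<Rightarrow> 'u \<Rightarrow> 'a" and p :: "real \<Rightarrow> 'a" and H :: "'a \<Rightarrow> real"
  assumes solution: "\<And>t. 0 \<le> t \<Longrightarrow>
              (\<lambda>s. f (p s) (u s)) integrable_on {0..t} \<and> p t = x + integral {0..t} (\<lambda>s. f (p s) (u s))"
    and in_X: "\<And>t. 0 \<le> t \<Longrightarrow> p t \<in> X" and in_U: "\<And>t. 0 \<le> t \<Longrightarrow> u t \<in> U"
    and field_bound: "\<And>y v. y \<in> X \<Longrightarrow> v \<in> U \<Longrightarrow> norm (f y v) \<le> C"
    and deriv: "\<And>y. y \<in> X \<Longrightarrow> (H has_derivative (\<lambda>h. gradH y \<bullet> h)) (at y)"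
    and grad_bound: "\<And>y. y \<in> X \<Longrightarrow> norm (gradH y) \<le> LH"
    and "0 \<le> T"
  shows "(LH * C)-lipschitz_on {0..T} (H \<circ> p)"
proof (rule lipschitz_on_compose_bounded_gradient[where gradH = gradH, OF \<open>0 \<le> T\<close>])
  have "C-lipschitz_on {0..} p"
    using solution in_X in_U field_bound
    by (intro integral_equation_lipschitz[where F = "\<lambda>s. f (p s) (u s)"]) auto
  then show "C-lipschitz_on {0..T} p"
    by (rule lipschitz_on_subset) auto
qed (use deriv grad_bound in_X in auto)

lemma DeltaH_diff_le:
  "DeltaH H Hmin Hmax x - DeltaH H Hmin Hmax y \<le> \<bar>H x - H y\<bar>"
  unfolding DeltaH_def by linarith

lemma T_star_greatest:
  assumes "\<And>u t. admissible U u \<Longrightarrow> 0 < t \<Longrightarrow> phi t x u \<in> H_tgt_eps X H Hmin Hmax \<epsilon> \<Longrightarrow> r \<le> t"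
  shows "ereal r \<le> T_star phi U X H Hmin Hmax \<epsilon> x"
  unfolding T_star_def T_eps_def using assms by (auto intro!: INF_greatest Inf_greatest)

lemma v_eps_le_and_T_star_ge:
  assumes D: "0 \<le> DeltaH H Hmin Hmax x" and \<epsilon>: "0 < \<epsilon>" and K: "0 \<le> K"
    and gap: "\<And>u t. admissible U u \<Longrightarrow> 0 < t \<Longrightarrow> phi t x u \<in> H_tgt_eps X H Hmin Hmax \<epsilon> \<Longrightarrow>
                DeltaH H Hmin Hmax x + \<epsilon> \<le> K * t"
  shows "v_eps phi U X H Hmin Hmax \<epsilon> x \<le> ereal K \<and> ereal (\<epsilon> / K) \<le> T_star phi U X H Hmin Hmax \<epsilon> x"
proof (cases "K = 0")
  case True
  \<comment> \<open>then the target is unreachable and the second bound reads 0 \<le> T_star, as \<epsilon> / 0 = 0\<close>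
  have "T_star phi U X H Hmin Hmax \<epsilon> x = \<infinity>"
    using gap D \<epsilon> True by (intro ereal_top T_star_greatest) force
  then show ?thesis
    using True by (simp add: v_eps_def)
next
  case False
  then have "0 < K" using K by simp
  define r where "r = (DeltaH H Hmin Hmax x + \<epsilon>) / K"
  have r: "0 < r" "\<epsilon> / K \<le> r"
    using D \<epsilon> \<open>0 < K\<close> by (auto simp: r_def divide_right_mono)
  have T: "ereal r \<le> T_star phi U X H Hmin Hmax \<epsilon> x"
    using gap \<open>0 < K\<close> by (intro T_star_greatest) (simp add: r_def pos_divide_le_eq mult.commute)
  have "v_eps phi U X H Hmin Hmax \<epsilon> x \<le> ereal K"
  proof (cases "T_star phi U X H Hmin Hmax \<epsilon> x")
    case (real s)
    with T have "r \<le> s" by simp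
    then have "0 < s" "DeltaH H Hmin Hmax x + \<epsilon> \<le> K * s"
      using r(1) \<open>0 < K\<close> by (linarith, simp add: r_def pos_divide_le_eq mult.commute)
    then show ?thesis
      using real by (simp add: v_eps_def pos_divide_le_eq mult.commute)
  qed (use T K in \<open>auto simp: v_eps_def\<close>)
  then show ?thesis
    using T r(2) order_trans ereal_less_eq(3) by blast
qed

theorem mainTheorem2:
  fixes X :: "(real^'n) set" and U :: "(real^'m) set"
    and H :: "real^'n \<Rightarrow> real" and gradH :: "real^'n \<Rightarrow> real^'n"
    and J :: "real^'n \<Rightarrow> real^'n^'n" and G :: "real^'n \<Rightarrow> real^'m^'n"
    and phi :: "real \<Rightarrow> real^'n \<Rightarrow> (real \<Rightarrow> real^'m) \<Rightarrow> real^'n"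
    and S_tgt :: "(real^'n) set"
    and L_H L C_f Hmin Hmax \<epsilon> :: real
  assumes X: "compact X" and U: "compact U"
    and skew: "\<And>x. transpose (J x) = - J x"
    \<comment> \<open>(A1): H is C^1 on X with gradient gradH, bounded by L_H\<close>
    and A1_deriv: "\<And>x. x \<in> X \<Longrightarrow> (H has_derivative (\<lambda>h. gradH x \<bullet> h)) (at x)"
    and A1_cont: "continuous_on X gradH"
    and A1_bound: "\<And>x. x \<in> X \<Longrightarrow> norm (gradH x) \<le> L_H"
    \<comment> \<open>(A2): Lipschitz in the state\<close>
    and L_pos: "L > 0"
    and A2: "\<And>x1 x2 u. x1 \<in> X \<Longrightarrow> x2 \<in> X \<Longrightarrow> u \<in> U \<Longrightarrow>
               norm (ham_field J gradH G x1 u - ham_field J gradH G x2 u) \<le> L * norm (x1 - x2)"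
    and Cf_pos: "C_f > 0"
    and Cf: "\<And>x u. x \<in> X \<Longrightarrow> u \<in> U \<Longrightarrow> norm (ham_field J gradH G x u) \<le> C_f"
    \<comment> \<open>phi is the state trajectory (Caratheodory solution), evolving in X\<close>
    and phi_in: "\<And>x u t. x \<in> X \<Longrightarrow> admissible U u \<Longrightarrow> t \<ge> 0 \<Longrightarrow> phi t x u \<in> X"
    and phi_sol: "\<And>x u t. x \<in> X \<Longrightarrow> admissible U u \<Longrightarrow> t \<ge> 0 \<Longrightarrow>
               (\<lambda>s. ham_field J gradH G (phi s x u) (u s)) integrable_on {0..t} \<and>
               phi t x u = x + integral {0..t} (\<lambda>s. ham_field J gradH G (phi s x u) (u s))"
    \<comment> \<open>target set\<close>
    and S_sub: "S_tgt \<subseteq> X" and S_compact: "compact S_tgt" and S_conn: "connected S_tgt"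
    and S_img: "H ` S_tgt = {Hmin..Hmax}"
    and eps: "0 < \<epsilon>" "\<epsilon> < Hminus Hmin Hmax"
    \<comment> \<open>(A5) with constant epsilon\<close>
    and A5: "\<exists>c>0. \<forall>x \<in> X - H_tgt_eps X H Hmin Hmax \<epsilon>.
               ereal c \<le> v_eps phi U X H Hmin Hmax \<epsilon> x"
  shows "\<forall>x \<in> X - H_tgt X H Hmin Hmax.
           v_eps phi U X H Hmin Hmax \<epsilon> x \<le> ereal (L_H * C_f) \<and>
           ereal (\<epsilon> / (L_H * C_f)) \<le> T_star phi U X H Hmin Hmax \<epsilon> x"
proof
  fix x assume x: "x \<in> X - H_tgt X H Hmin Hmax"
  then have "x \<in> X" by simp
  have gap: "DeltaH H Hmin Hmax x + \<epsilon> \<le> L_H * C_f * t"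
    if u: "admissible U u" and t: "0 < t" "phi t x u \<in> H_tgt_eps X H Hmin Hmax \<epsilon>" for u t
  proof -
    have lip: "(L_H * C_f)-lipschitz_on {0..t} (H \<circ> (\<lambda>s. phi s x u))"
      by (rule lipschitz_on_energy_along_solution[where f = "ham_field J gradH G" and u = u,
            OF phi_sol[OF \<open>x \<in> X\<close> u] phi_in[OF \<open>x \<in> X\<close> u] _
            Cf A1_deriv A1_bound])
         (use u t in \<open>auto simp: admissible_def\<close>)
    have "\<bar>H (phi t x u) - H (phi 0 x u)\<bar> \<le> L_H * C_f * t"
      using lipschitz_onD[OF lip, of t 0] t by (simp add: dist_real_def)
    moreover have "phi 0 x u = x"
      using phi_sol[OF \<open>x \<in> X\<close> u, of 0] by simp
    moreover have "DeltaH H Hmin Hmax (phi t x u) \<le> - \<epsilon>"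
      using t by (simp add: H_tgt_eps_def)
    ultimately show ?thesis
      using DeltaH_diff_le[of H Hmin Hmax x "phi t x u"] by (simp add: abs_minus_commute)
  qed
  have "0 \<le> L_H"
    using A1_bound[OF \<open>x \<in> X\<close>] by (rule order_trans[OF norm_ge_zero])
  then have "0 \<le> L_H * C_f"
    using Cf_pos by simp
  moreover have "0 \<le> DeltaH H Hmin Hmax x"
    using x by (auto simp: H_tgt_def)
  ultimately show "v_eps phi U X H Hmin Hmax \<epsilon> x \<le> ereal (L_H * C_f) \<and>
      ereal (\<epsilon> / (L_H * C_f)) \<le> T_star phi U X H Hmin Hmax \<epsilon> x"
    using eps gap by (intro v_eps_le_and_T_star_ge)
qed

end
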